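(* The one-dimensional subalgebras of ${\rm S}_1$ are exactly $\langle e_1\rangle$, $\langle e_2\rangle$ and $\langle\alpha e_2+e_3\rangle$ ($\alpha\in\mathbb{C}$). Up to automorphisms of ${\rm S}_1$, every one-dimensional subalgebra is equivalent to $\langle e_1\rangle$ or $\langle e_2\rangle$.
   Context: ${\rm S}_1$ is the complex algebra with basis $e_1,e_2,e_3$ whose only nonzero products of basis elements are $e_1e_i=e_ie_1=e_i$ ($i=1,2,3$), with involution $\overline{e_1}=e_1$, $\overline{e_2}=-e_2$, $\overline{e_3}=-e_3$ (which plays no role here). A subalgebra is a linear subspace closed under multiplication (it need not contain $e_1$). Equivalence up to automorphisms means one is mapped onto the other by an algebra automorphism. $\langle S\rangle$ denotes linear span. *)

theory Defs
  imports "HOL-Analysis.Analysis"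
begin

text \<open>The algebra S_1: elements are coordinate triples (x1,x2,x3) meaning
  x1 e1 + x2 e2 + x3 e3, as a complex vector space with componentwise
  addition (from HOL-Library.Product_Plus) and complex scalar multiplication s1_scale.\<close>

type_synonym S1 = "complex \<times> complex \<times> complex"

definition s1_scale :: "complex \<Rightarrow> S1 \<Rightarrow> S1" where
  "s1_scale c x = (c * fst x, c * fst (snd x), c * snd (snd x))"

definition e1 :: S1 where "e1 = (1, 0, 0)"
definition e2 :: S1 where "e2 = (0, 1, 0)"
definition e3 :: S1 where "e3 = (0, 0, 1)"

text \<open>Bilinear product with e1 e_i = e_i e1 = e_i and all other basis products zero.\<close>
definition s1_mult :: "S1 \<Rightarrow> S1 \<Rightarrow> S1" where
  "s1_mult x y = (fst x * fst y,
                  fst x * fst (snd y) + fst (snd x) * fst y,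
                  fst x * snd (snd y) + snd (snd x) * fst y)"

lemma s1_vector_space: "vector_space s1_scale"
  by unfold_locales (auto simp: s1_scale_def algebra_simps)

definition s1_span :: "S1 set \<Rightarrow> S1 set" where
  "s1_span S = module.span s1_scale S"

definition s1_dim :: "S1 set \<Rightarrow> nat" where
  "s1_dim V = vector_space.dim s1_scale V"

text \<open>Subalgebra: linear subspace closed under multiplication (need not contain e1).\<close>
definition s1_subalgebra :: "S1 set \<Rightarrow> bool" where
  "s1_subalgebra V \<longleftrightarrow> module.subspace s1_scale V \<and> (\<forall>x\<in>V. \<forall>y\<in>V. s1_mult x y \<in> V)"

definition s1_automorphism :: "(S1 \<Rightarrow> S1) \<Rightarrow> bool" where
  "s1_automorphism f \<longleftrightarrow> Vector_Spaces.linear s1_scale s1_scale f \<and> bij f \<and>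
     (\<forall>x y. f (s1_mult x y) = s1_mult (f x) (f y))"

end

theory Submission
  imports Defs
begin

text \<open>Write S1 = \<langle>e1\<rangle> \<oplus> N with N = \<langle>e2, e3\<rangle>: e1 is a unit and N^2 = 0.
  A line \<langle>v\<rangle> is a subalgebra iff v^2 is a multiple of v, and for v = a e1 + n
  one has v^2 = a^2 e1 + 2 a n, which is proportional to v iff a = 0 or n = 0.
  So the one-dimensional subalgebras are \<langle>e1\<rangle> and the lines in N. Every linear
  bijection fixing e1 and preserving N is an automorphism, and these act
  transitively on the lines of N.\<close>

lemma (in vector_space) subspace_dim_eq_1_iff:
  assumes "subspace V"
  shows "dim V = 1 \<longleftrightarrow> (\<exists>v. v \<noteq> 0 \<and> V = span {v})"
proof
  assume "dim V = 1"
  obtain B where B: "B \<subseteq> V" "independent B" "V \<subseteq> span B" "card B = dim V"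
    using basis_exists by blast
  with \<open>dim V = 1\<close> obtain v where v: "B = {v}"
    by (auto simp: card_Suc_eq)
  have "v \<noteq> 0"
    using B(2) v independent_insert by auto
  moreover have "V = span {v}"
    using B v assms span_minimal by blast
  ultimately show "\<exists>v. v \<noteq> 0 \<and> V = span {v}" by blast
next
  assume "\<exists>v. v \<noteq> 0 \<and> V = span {v}"
  then obtain v where "v \<noteq> 0" "V = span {v}" by blast
  then show "dim V = 1"
    using dim_span_eq_card_independent independent_insert by auto
qed

interpretation s1: vector_space s1_scale
  by (rule s1_vector_space)

lemma s1_span_singleton: "s1_span {v} = range (\<lambda>k. s1_scale k v)"
  unfolding s1_span_def by (rule s1.span_singleton)

lemma s1_span_singleton_scale:
  assumes "c \<noteq> 0"
  shows "s1_span {s1_scale c v} = s1_span {v}"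
proof -
  have "s1_scale k v \<in> range (\<lambda>l. s1_scale (l * c) v)" for k
    using assms by (intro image_eqI[where x = "k / c"]) simp_all
  then show ?thesis
    unfolding s1_span_singleton by (auto simp: s1.scale_scale)
qed

lemma s1_mult_scale:
  "s1_mult (s1_scale k x) (s1_scale l y) = s1_scale (k * l) (s1_mult x y)"
  by (simp add: s1_mult_def s1_scale_def algebra_simps)

lemma s1_subalgebra_dim_eq_1_iff:
  "s1_subalgebra V \<and> s1_dim V = 1 \<longleftrightarrow>
     (\<exists>v. v \<noteq> 0 \<and> V = s1_span {v} \<and> (\<exists>k. s1_mult v v = s1_scale k v))"
proof
  assume V: "s1_subalgebra V \<and> s1_dim V = 1"
  then obtain v where v: "v \<noteq> 0" "V = s1_span {v}"
    using s1.subspace_dim_eq_1_iff by (auto simp: s1_subalgebra_def s1_dim_def s1_span_def)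
  then have "v \<in> V"
    using s1.span_base by (simp add: s1_span_def)
  with V have "s1_mult v v \<in> V"
    by (simp add: s1_subalgebra_def)
  then obtain k where "s1_mult v v = s1_scale k v"
    using v(2) by (auto simp: s1_span_singleton)
  with v show "\<exists>v. v \<noteq> 0 \<and> V = s1_span {v} \<and> (\<exists>k. s1_mult v v = s1_scale k v)"
    by blast
next
  assume "\<exists>v. v \<noteq> 0 \<and> V = s1_span {v} \<and> (\<exists>k. s1_mult v v = s1_scale k v)"
  then obtain v k where v: "v \<noteq> 0" "V = s1_span {v}" "s1_mult v v = s1_scale k v"
    by blast
  have "\<forall>x\<in>V. \<forall>y\<in>V. s1_mult x y \<in> V"
    using v by (auto simp: s1_span_singleton s1_mult_scale s1.scale_scale)
  moreover have subspace: "module.subspace s1_scale V"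
    using v(2) s1.subspace_span by (simp add: s1_span_def)
  moreover have "s1_dim V = 1"
    unfolding s1_dim_def s1.subspace_dim_eq_1_iff[OF subspace]
    using v(1,2) unfolding s1_span_def by blast
  ultimately show "s1_subalgebra V \<and> s1_dim V = 1"
    by (simp add: s1_subalgebra_def)
qed

lemma s1_square_proportional_span_cases:
  assumes "v \<noteq> 0" "s1_mult v v = s1_scale k v"
  shows "s1_span {v} = s1_span {e1} \<or> s1_span {v} = s1_span {e2} \<or>
         (\<exists>\<alpha>. s1_span {v} = s1_span {s1_scale \<alpha> e2 + e3})"
proof -
  obtain a b c where v: "v = (a, b, c)"
    by (cases v) auto
  have sq: "a * a = k * a" "2 * a * b = k * b" "2 * a * c = k * c"
    using assms(2) by (auto simp: v s1_mult_def s1_scale_def algebra_simps)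
  consider "a \<noteq> 0" | "a = 0" "c = 0" | "a = 0" "c \<noteq> 0"
    by blast
  then show ?thesis
  proof cases
    case 1
    with sq have "k = a" "b = 0" "c = 0"
      by auto
    then have "v = s1_scale a e1"
      by (simp add: v s1_scale_def e1_def)
    with 1 show ?thesis
      by (simp add: s1_span_singleton_scale)
  next
    case 2
    with assms(1) have "b \<noteq> 0"
      by (auto simp: v zero_prod_def)
    moreover have "v = s1_scale b e2"
      using 2 by (simp add: v s1_scale_def e2_def)
    ultimately show ?thesis
      by (simp add: s1_span_singleton_scale)
  next
    case 3
    then have "v = s1_scale c (s1_scale (b / c) e2 + e3)"
      by (simp add: v s1_scale_def e2_def e3_def)
    with 3 show ?thesis
      by (metis s1_span_singleton_scale)
  qed
qed

lemma s1_one_dim_subalgebra_iff: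
  "s1_subalgebra V \<and> s1_dim V = 1 \<longleftrightarrow>
     V = s1_span {e1} \<or> V = s1_span {e2} \<or> (\<exists>\<alpha>. V = s1_span {s1_scale \<alpha> e2 + e3})"
proof
  assume "s1_subalgebra V \<and> s1_dim V = 1"
  then show "V = s1_span {e1} \<or> V = s1_span {e2} \<or> (\<exists>\<alpha>. V = s1_span {s1_scale \<alpha> e2 + e3})"
    using s1_subalgebra_dim_eq_1_iff s1_square_proportional_span_cases by metis
next
  have "e1 \<noteq> 0 \<and> s1_mult e1 e1 = s1_scale 1 e1"
    by (simp add: e1_def s1_mult_def s1_scale_def zero_prod_def)
  moreover have "e2 \<noteq> 0 \<and> s1_mult e2 e2 = s1_scale 0 e2"
    by (simp add: e2_def s1_mult_def s1_scale_def zero_prod_def)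
  moreover have "s1_scale \<alpha> e2 + e3 \<noteq> 0 \<and>
      s1_mult (s1_scale \<alpha> e2 + e3) (s1_scale \<alpha> e2 + e3) = s1_scale 0 (s1_scale \<alpha> e2 + e3)" for \<alpha>
    by (simp add: e2_def e3_def s1_mult_def s1_scale_def zero_prod_def)
  moreover assume "V = s1_span {e1} \<or> V = s1_span {e2} \<or> (\<exists>\<alpha>. V = s1_span {s1_scale \<alpha> e2 + e3})"
  ultimately show "s1_subalgebra V \<and> s1_dim V = 1"
    unfolding s1_subalgebra_dim_eq_1_iff by blast
qed

definition s1_straighten :: "complex \<Rightarrow> S1 \<Rightarrow> S1" where
  "s1_straighten \<alpha> x = (fst x, snd (snd x), fst (snd x) - \<alpha> * snd (snd x))"

lemma s1_automorphism_id: "s1_automorphism id"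
  unfolding s1_automorphism_def Vector_Spaces.linear_iff
  using s1_vector_space by auto

lemma s1_automorphism_straighten: "s1_automorphism (s1_straighten \<alpha>)"
  unfolding s1_automorphism_def
proof (intro conjI allI)
  show "Vector_Spaces.linear s1_scale s1_scale (s1_straighten \<alpha>)"
    unfolding Vector_Spaces.linear_iff using s1_vector_space
    by (auto simp: s1_straighten_def s1_scale_def algebra_simps)
  have "s1_straighten \<alpha> (a, c + \<alpha> * b, b) = (a, b, c)" for a b c
    by (simp add: s1_straighten_def)
  then have "y \<in> range (s1_straighten \<alpha>)" for y
    by (cases y) (metis rangeI)
  then have "surj (s1_straighten \<alpha>)"
    by blast
  moreover have "inj (s1_straighten \<alpha>)"
    by (auto simp: inj_def s1_straighten_def prod_eq_iff)
  ultimately show "bij (s1_straighten \<alpha>)"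
    by (simp add: bij_def)
  show "s1_straighten \<alpha> (s1_mult x y) = s1_mult (s1_straighten \<alpha> x) (s1_straighten \<alpha> y)" for x y
    by (simp add: s1_straighten_def s1_mult_def algebra_simps)
qed

lemma s1_straighten_image:
  "s1_straighten \<alpha> ` s1_span {s1_scale \<alpha> e2 + e3} = s1_span {e2}"
proof -
  have "s1_straighten \<alpha> (s1_scale k (s1_scale \<alpha> e2 + e3)) = s1_scale k e2" for k
    by (simp add: s1_straighten_def s1_scale_def e2_def e3_def)
  then show ?thesis
    unfolding s1_span_singleton image_image by simp
qed

theorem mainTheorem14:
  shows "(\<forall>V. (s1_subalgebra V \<and> s1_dim V = 1) \<longleftrightarrow>
            (V = s1_span {e1} \<or> V = s1_span {e2} \<or>
             (\<exists>\<alpha>::complex. V = s1_span {s1_scale \<alpha> e2 + e3})))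
       \<and> (\<forall>V. s1_subalgebra V \<and> s1_dim V = 1 \<longrightarrow>
            (\<exists>f. s1_automorphism f \<and> (f ` V = s1_span {e1} \<or> f ` V = s1_span {e2})))"
proof (intro conjI allI impI)
  show "s1_subalgebra V \<and> s1_dim V = 1 \<longleftrightarrow>
      V = s1_span {e1} \<or> V = s1_span {e2} \<or> (\<exists>\<alpha>. V = s1_span {s1_scale \<alpha> e2 + e3})" for V
    by (rule s1_one_dim_subalgebra_iff)
next
  fix V
  assume "s1_subalgebra V \<and> s1_dim V = 1"
  then consider "V = s1_span {e1} \<or> V = s1_span {e2}" | \<alpha> where "V = s1_span {s1_scale \<alpha> e2 + e3}"
    using s1_one_dim_subalgebra_iff by blast
  then show "\<exists>f. s1_automorphism f \<and> (f ` V = s1_span {e1} \<or> f ` V = s1_span {e2})"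
  proof cases
    case 1
    then show ?thesis
      using s1_automorphism_id by auto
  next
    case 2
    then show ?thesis
      using s1_automorphism_straighten s1_straighten_image by blast
  qed
qed

end
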